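(* Assume Hypothesis (H). Let $\mathfrak k$ be a Lie subalgebra of $\mathfrak g$ with $\mathfrak h\subsetneq\mathfrak k$, let $\mathfrak k_1,\dots,\mathfrak k_r$ ($r\ge1$) be all the maximal Lie subalgebras of $\mathfrak k$ containing $\mathfrak h$ as a proper subset, and put $\mathfrak l_i=\mathfrak k\ominus\mathfrak k_i$. Let $\Theta(\mathfrak k)$ be the class of $\mathrm{Ad}(H)$-invariant proper subspaces $\mathfrak u\subsetneq\mathfrak k\ominus\mathfrak h$ with $\mathfrak u\cap\mathfrak l_i\neq\{0\}$ for every $i=1,\dots,r$. Define $\theta=\inf\{\langle\mathfrak u\mathfrak u\mathfrak q\rangle:\mathfrak u\in\Theta(\mathfrak k),\ \mathfrak q=\mathfrak k\ominus(\mathfrak u\oplus\mathfrak h)\}$ if $\Theta(\mathfrak k)\ne\emptyset$, and $\theta=1$ otherwise. Then $\theta>0$.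
   Context: Let $G$ be a compact connected Lie group with Lie algebra $\mathfrak g$ and $H<G$ a closed connected subgroup with Lie algebra $\mathfrak h$; $M=G/H$, $\dim M\ge3$. Fix an $\mathrm{Ad}(G)$-invariant inner product $Q$ on $\mathfrak g$; $\mathfrak v\ominus\mathfrak u$ is the $Q$-orthogonal complement, $\pi_{\mathfrak u}$ the $Q$-orthogonal projection, $\oplus$ the $Q$-orthogonal sum; $\mathfrak m=\mathfrak g\ominus\mathfrak h$. For $\mathrm{Ad}(H)$-invariant $\mathfrak u,\mathfrak v,\mathfrak w\subset\mathfrak m$, $\langle\mathfrak u\mathfrak v\mathfrak w\rangle=\sum_{a,b}Q(\pi_{\mathfrak u}[e_a,f_b],\pi_{\mathfrak u}[e_a,f_b])$ with $(e_a),(f_b)$ $Q$-orthonormal bases of $\mathfrak v,\mathfrak w$ ($0$ if a space is zero). Hypothesis (H): every Lie subalgebra $\mathfrak s\subset\mathfrak g$ with $\mathfrak h\subsetneq\mathfrak s$ satisfies (1) for all nonzero $\mathrm{Ad}(H)$-invariant subspaces $\mathfrak u\subset\mathfrak s\ominus\mathfrak h$ and $\mathfrak v\subset\mathfrak g\ominus\mathfrak s$, the representations $\mathrm{Ad}(H)|_{\mathfrak u}$ and $\mathrm{Ad}(H)|_{\mathfrak v}$ are inequivalent; (2) $[\mathfrak r,\mathfrak s]\neq\{0\}$ for every $\mathrm{Ad}(H)$-invariant one-dimensional subspace $\mathfrak r\subset\mathfrak g\ominus\mathfrak s$. *)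

theory Defs
  imports "HOL-Analysis.Analysis"
begin

text \<open>The Lie algebra g is modelled as a finite-dimensional real inner product space
  'g (type class euclidean_space), whose inner product plays the role of Q, together
  with a bracket br.\<close>

definition compact_lie_algebra :: "('g::euclidean_space \<Rightarrow> 'g \<Rightarrow> 'g) \<Rightarrow> bool" where
  "compact_lie_algebra br \<longleftrightarrow>
     (\<forall>x. linear (br x)) \<and> (\<forall>y. linear (\<lambda>x. br x y)) \<and>
     (\<forall>x y. br x y = - br y x) \<and>
     (\<forall>x y z. br x (br y z) + br y (br z x) + br z (br x y) = 0) \<and>
     (\<forall>x y z. inner (br x y) z = - inner y (br x z))"
  (* the last condition: Q is ad-invariant (infinitesimal form of Ad(G)-invariance) *)

definition lie_subalgebra :: "('g::euclidean_space \<Rightarrow> 'g \<Rightarrow> 'g) \<Rightarrow> 'g set \<Rightarrow> bool" where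
  "lie_subalgebra br s \<longleftrightarrow> subspace s \<and> (\<forall>x\<in>s. \<forall>y\<in>s. br x y \<in> s)"

definition ominus :: "'g::euclidean_space set \<Rightarrow> 'g set \<Rightarrow> 'g set" where
  "ominus v u = {x\<in>v. \<forall>y\<in>u. inner x y = 0}"

text \<open>Q-orthogonal sum  u \<oplus> w  (used only for mutually orthogonal subspaces).\<close>
definition osum :: "'g::euclidean_space set \<Rightarrow> 'g set \<Rightarrow> 'g set" where
  "osum u w = {x + y | x y. x \<in> u \<and> y \<in> w}"

definition proj :: "'g::euclidean_space set \<Rightarrow> 'g \<Rightarrow> 'g" where
  "proj u x = (THE p. p \<in> u \<and> (\<forall>y\<in>u. inner (x - p) y = 0))"

definition orthonormal_basis :: "'g::euclidean_space set \<Rightarrow> 'g set \<Rightarrow> bool" where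
  "orthonormal_basis B V \<longleftrightarrow> finite B \<and> B \<subseteq> V \<and> span B = V \<and>
     pairwise orthogonal B \<and> (\<forall>b\<in>B. norm b = 1)"

text \<open>The bracket  <u v w>  (independent of the choice of orthonormal bases;
  it is 0 when v or w is zero since the bases are then empty).\<close>
definition triple :: "('g::euclidean_space \<Rightarrow> 'g \<Rightarrow> 'g) \<Rightarrow> 'g set \<Rightarrow> 'g set \<Rightarrow> 'g set \<Rightarrow> real" where
  "triple br u v w =
     (\<Sum>e\<in>(SOME B. orthonormal_basis B v). \<Sum>f\<in>(SOME C. orthonormal_basis C w).
        inner (proj u (br e f)) (proj u (br e f)))"

text \<open>Ad(H)-invariance, H connected with Lie algebra h, i.e. ad(h)-invariance.\<close>
definition invariant :: "('g::euclidean_space \<Rightarrow> 'g \<Rightarrow> 'g) \<Rightarrow> 'g set \<Rightarrow> 'g set \<Rightarrow> bool" where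
  "invariant br h u \<longleftrightarrow> subspace u \<and> (\<forall>x\<in>h. \<forall>y\<in>u. br x y \<in> u)"

text \<open>Equivalence of the representations of H (equivalently of h, H connected) on u and v.\<close>
definition equivalent_reps :: "('g::euclidean_space \<Rightarrow> 'g \<Rightarrow> 'g) \<Rightarrow> 'g set \<Rightarrow> 'g set \<Rightarrow> 'g set \<Rightarrow> bool" where
  "equivalent_reps br h u v \<longleftrightarrow>
     (\<exists>T. linear T \<and> bij_betw T u v \<and> (\<forall>x\<in>h. \<forall>y\<in>u. T (br x y) = br x (T y)))"

definition hypothesis_H :: "('g::euclidean_space \<Rightarrow> 'g \<Rightarrow> 'g) \<Rightarrow> 'g set \<Rightarrow> bool" where
  "hypothesis_H br h \<longleftrightarrow>
     (\<forall>s. lie_subalgebra br s \<and> h \<subset> s \<longrightarrow>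
        (\<forall>u v. invariant br h u \<and> u \<noteq> {0} \<and> u \<subseteq> ominus s h \<and>
               invariant br h v \<and> v \<noteq> {0} \<and> v \<subseteq> ominus UNIV s \<longrightarrow>
               \<not> equivalent_reps br h u v) \<and>
        (\<forall>r. invariant br h r \<and> dim r = 1 \<and> r \<subseteq> ominus UNIV s \<longrightarrow>
               (\<exists>x\<in>r. \<exists>y\<in>s. br x y \<noteq> 0)))"

definition max_subalgebras :: "('g::euclidean_space \<Rightarrow> 'g \<Rightarrow> 'g) \<Rightarrow> 'g set \<Rightarrow> 'g set \<Rightarrow> 'g set set" where
  "max_subalgebras br h k = {s. lie_subalgebra br s \<and> s \<subset> k \<and> h \<subset> s \<and>
      (\<forall>t. lie_subalgebra br t \<and> s \<subseteq> t \<and> t \<subset> k \<longrightarrow> t = s)}"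

definition Theta :: "('g::euclidean_space \<Rightarrow> 'g \<Rightarrow> 'g) \<Rightarrow> 'g set \<Rightarrow> 'g set \<Rightarrow> 'g set set" where
  "Theta br h k = {u. invariant br h u \<and> u \<subset> ominus k h \<and>
      (\<forall>s\<in>max_subalgebras br h k. u \<inter> ominus k s \<noteq> {0})}"

definition theta :: "('g::euclidean_space \<Rightarrow> 'g \<Rightarrow> 'g) \<Rightarrow> 'g set \<Rightarrow> 'g set \<Rightarrow> real" where
  "theta br h k = (if Theta br h k = {} then 1
     else Inf {triple br u u (ominus k (osum u h)) | u. u \<in> Theta br h k})"

end

theory Submission
  imports Defs
begin

text \<open>Suppose the infimum were 0. An element u of Theta, together with unit vectors of u in each
  k \<ominus> k_i and a unit vector of (k \<ominus> h) \<ominus> u, can be encoded by finitely many vectors of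
  norm at most 1, and \<open>\<langle>u u q\<rangle>\<close> bounds the distance of the brackets of u from u \<oplus> h.
  By compactness a sequence with \<open>\<langle>u u q\<rangle> \<rightarrow> 0\<close> has a limit configuration whose subspace U
  satisfies [U, U] \<subseteq> U \<oplus> h exactly, so U \<oplus> h is a Lie subalgebra strictly between h and k.
  It lies in some maximal k_i, yet U still meets k \<ominus> k_i, a contradiction.\<close>

lemma proj_eqI:
  fixes S :: "'g::euclidean_space set"
  assumes "subspace S" "p \<in> S" "\<And>z. z \<in> S \<Longrightarrow> inner (y - p) z = 0"
  shows "proj S y = p"
  unfolding proj_def
proof (rule the_equality)
  fix p' assume p': "p' \<in> S \<and> (\<forall>z\<in>S. inner (y - p') z = 0)"
  have "p - p' \<in> S" using assms p' by (simp add: subspace_diff)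
  then have "inner (p - p') (p - p') = inner (y - p') (p - p') - inner (y - p) (p - p')"
    by (simp add: inner_diff_left algebra_simps)
  also have "\<dots> = 0" using \<open>p - p' \<in> S\<close> assms p' by simp
  finally show "p' = p" by simp
qed (use assms in auto)

lemma
  fixes S :: "'g::euclidean_space set"
  assumes "subspace S"
  shows proj_in: "proj S y \<in> S"
    and proj_orthogonal: "z \<in> S \<Longrightarrow> inner (y - proj S y) z = 0"
proof -
  obtain p r where "p \<in> S" "\<And>z. z \<in> S \<Longrightarrow> orthogonal r z" "y = p + r"
    using orthogonal_subspace_decomp_exists[of S y] span_eq_iff[of S] assms by metis
  then have "proj S y = p"
    by (intro proj_eqI assms) (auto simp: orthogonal_def)
  then show "proj S y \<in> S" "z \<in> S \<Longrightarrow> inner (y - proj S y) z = 0"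
    using \<open>p \<in> S\<close> \<open>\<And>z. z \<in> S \<Longrightarrow> orthogonal r z\<close> \<open>y = p + r\<close> by (auto simp: orthogonal_def)
qed

lemma proj_id: "subspace S \<Longrightarrow> y \<in> S \<Longrightarrow> proj S y = y"
  by (rule proj_eqI) auto

lemma linear_proj:
  fixes S :: "'g::euclidean_space set"
  assumes "subspace S"
  shows "linear (proj S)"
proof (rule linearI)
  fix x y :: 'g and c :: real
  show "proj S (x + y) = proj S x + proj S y"
  proof (rule proj_eqI[OF assms])
    show "proj S x + proj S y \<in> S" using assms proj_in[OF assms] by (simp add: subspace_add)
    fix z assume "z \<in> S"
    then have "inner (x - proj S x) z + inner (y - proj S y) z = 0"
      using proj_orthogonal[OF assms] by simp
    then show "inner (x + y - (proj S x + proj S y)) z = 0"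
      by (simp add: inner_diff_left inner_add_left algebra_simps)
  qed
  show "proj S (c *\<^sub>R x) = c *\<^sub>R proj S x"
  proof (rule proj_eqI[OF assms])
    show "c *\<^sub>R proj S x \<in> S" using assms proj_in[OF assms] by (simp add: subspace_scale)
    fix z assume "z \<in> S"
    then show "inner (c *\<^sub>R x - c *\<^sub>R proj S x) z = 0"
      using proj_orthogonal[OF assms] by (simp add: scaleR_diff_right[symmetric])
  qed
qed

lemma subspace_ominus: "subspace v \<Longrightarrow> subspace (ominus v u)"
  unfolding subspace_def ominus_def by (auto simp: inner_add_left)

lemma ominus_subset: "ominus v u \<subseteq> v"
  unfolding ominus_def by auto

lemma subspace_osum: "subspace u \<Longrightarrow> subspace h \<Longrightarrow> subspace (osum u h)"
  unfolding osum_def by (rule subspace_sums)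

lemma proj_ominus_osum:
  fixes k h u :: "'g::euclidean_space set"
  assumes "subspace k" "subspace h" "subspace u" "h \<subseteq> k" "u \<subseteq> ominus k h" "y \<in> k"
  shows "proj (ominus k (osum u h)) y = y - proj u y - proj h y"
proof (rule proj_eqI)
  have pu: "proj u y \<in> u" and ph: "proj h y \<in> h"
    using proj_in assms(2,3) by auto
  have uh: "inner a b = 0" if "a \<in> u" "b \<in> h" for a b
    using assms(5) that unfolding ominus_def by auto
  have "y - proj u y - proj h y \<in> k"
    using pu ph assms ominus_subset by (meson subsetD subspace_diff)
  moreover have "inner (y - proj u y - proj h y) a = 0" if "a \<in> u" for a
  proof -
    have "inner (y - proj u y) a = 0" "inner (proj h y) a = 0"
      using proj_orthogonal[OF assms(3) that] uh[OF that ph] by (auto simp: inner_commute)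
    then show ?thesis by (simp add: inner_diff_left)
  qed
  moreover have "inner (y - proj u y - proj h y) b = 0" if "b \<in> h" for b
    using proj_orthogonal[OF assms(2) that] uh[OF pu that]
    by (simp add: inner_diff_left algebra_simps)
  ultimately show "y - proj u y - proj h y \<in> ominus k (osum u h)"
    unfolding ominus_def osum_def by (auto simp: inner_add_right)
  show "inner (y - (y - proj u y - proj h y)) z = 0" if "z \<in> ominus k (osum u h)" for z
  proof -
    have "inner z (proj u y + proj h y) = 0"
      using that pu ph unfolding ominus_def osum_def by blast
    then show ?thesis by (simp add: inner_commute add.commute)
  qed
qed (use assms in \<open>simp_all add: subspace_ominus\<close>)

text \<open>Frames may contain zero vectors, so that subspaces of any dimension have frames of the
  common length DIM('g); limits of such frames are again frames.\<close>

definition orthonormal_frame :: "'i set \<Rightarrow> ('i \<Rightarrow> 'g::euclidean_space) \<Rightarrow> bool" where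
  "orthonormal_frame I e \<longleftrightarrow>
     (\<forall>i\<in>I. \<forall>j\<in>I. i \<noteq> j \<longrightarrow> inner (e i) (e j) = 0) \<and> (\<forall>i\<in>I. norm (e i) \<in> {0, 1})"

definition frame_proj :: "'i set \<Rightarrow> ('i \<Rightarrow> 'g::euclidean_space) \<Rightarrow> 'g \<Rightarrow> 'g" where
  "frame_proj I e y = (\<Sum>i\<in>I. inner y (e i) *\<^sub>R e i)"

lemma frame_proj_in_span: "frame_proj I e y \<in> span (e ` I)"
  unfolding frame_proj_def by (intro span_sum span_scale span_base) auto

lemma proj_span_frame:
  assumes "finite I" "orthonormal_frame I e"
  shows "proj (span (e ` I)) y = frame_proj I e y"
proof (rule proj_eqI)
  have "inner (frame_proj I e y) (e j) = inner y (e j)" if "j \<in> I" for j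
  proof -
    have "inner (frame_proj I e y) (e j) = (\<Sum>i\<in>I. inner y (e i) * inner (e i) (e j))"
      by (simp add: frame_proj_def inner_sum_left)
    also have "\<dots> = (\<Sum>i\<in>{j}. inner y (e i) * inner (e i) (e j))"
      using assms that by (intro sum.mono_neutral_right) (auto simp: orthonormal_frame_def)
    finally have "inner (frame_proj I e y) (e j) = inner y (e j) * inner (e j) (e j)" by simp
    moreover have "norm (e j) = 0 \<or> inner (e j) (e j) = 1"
      using assms(2) that by (auto simp: orthonormal_frame_def norm_eq_1)
    ultimately show ?thesis by auto
  qed
  then have "orthogonal (y - frame_proj I e y) x" if "x \<in> e ` I" for x
    using that by (auto simp: orthogonal_def inner_diff_left)
  then show "inner (y - frame_proj I e y) z = 0" if "z \<in> span (e ` I)" for z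
    using orthogonal_to_span[OF that] by (simp add: orthogonal_def)
qed (simp_all add: frame_proj_in_span)

lemma orthonormal_basis_exists:
  fixes S :: "'g::euclidean_space set"
  assumes "subspace S"
  shows "\<exists>B. orthonormal_basis B S"
proof -
  obtain B where "B \<subseteq> S" "pairwise orthogonal B" "\<And>x. x \<in> B \<Longrightarrow> norm x = 1"
    "independent B" "span B = S"
    using orthonormal_basis_subspace[OF assms] by metis
  then have "orthonormal_basis B S"
    unfolding orthonormal_basis_def by (simp add: independent_imp_finite)
  then show ?thesis ..
qed

lemma orthonormal_basis_imp_frame:
  "orthonormal_basis B U \<Longrightarrow> orthonormal_frame B id"
  unfolding orthonormal_basis_def orthonormal_frame_def pairwise_def orthogonal_def by auto

lemma norm_proj_orthonormal_basis:
  assumes "orthonormal_basis B U"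
  shows "(norm (proj U y))\<^sup>2 = (\<Sum>b\<in>B. (inner y b)\<^sup>2)"
proof -
  have B: "finite B" "span B = U"
    using assms by (auto simp: orthonormal_basis_def)
  have "proj U y \<in> U"
    using proj_in[of U] B(2) by (metis subspace_span)
  then have "inner (y - proj U y) (proj U y) = 0"
    using proj_orthogonal[of U] B(2) by (metis subspace_span)
  then have "inner (proj U y) (proj U y) = inner y (proj U y)"
    by (simp add: inner_diff_left)
  then have "(norm (proj U y))\<^sup>2 = inner (proj U y) y"
    by (simp add: power2_norm_eq_inner inner_commute)
  also have "\<dots> = (\<Sum>b\<in>B. (inner y b)\<^sup>2)"
    using proj_span_frame[OF B(1) orthonormal_basis_imp_frame[OF assms], of y] B(2)
    by (simp add: frame_proj_def inner_sum_left inner_sum_right power2_eq_square inner_commute)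
  finally show ?thesis .
qed

lemma orthonormal_basis_padded_frame:
  fixes B S :: "'g::euclidean_space set"
  assumes "orthonormal_basis B S"
  obtains e where "orthonormal_frame {..<DIM('g)} e" "e ` {..<DIM('g)} \<subseteq> insert 0 B"
    "span (e ` {..<DIM('g)}) = S"
proof -
  have B: "finite B" "span B = S" "orthonormal_frame B id"
    using assms orthonormal_basis_imp_frame by (auto simp: orthonormal_basis_def)
  have "independent B"
    using assms pairwise_orthogonal_independent unfolding orthonormal_basis_def
    by (metis norm_zero zero_neq_one)
  then have card: "card B \<le> DIM('g)"
    using independent_bound by auto
  obtain g where g: "bij_betw g {..<card B} B"
    using ex_bij_betw_nat_finite[OF B(1)] by (auto simp: atLeast0LessThan)
  define e where "e i = (if i < card B then g i else 0)" for i
  have "e ` {..<DIM('g)} = g ` {..<card B} \<union> (\<lambda>_. 0) ` {card B..<DIM('g)}"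
    using card unfolding e_def by (auto simp: image_def)
  then have img: "e ` {..<DIM('g)} \<subseteq> insert 0 B" "B \<subseteq> e ` {..<DIM('g)}"
    using bij_betw_imp_surj_on[OF g] by auto
  have "inner (e i) (e j) = 0" if "i \<noteq> j" for i j
  proof (cases "i < card B \<and> j < card B")
    case True
    then have "g i \<noteq> g j" "g i \<in> B" "g j \<in> B"
      using that inj_onD[OF bij_betw_imp_inj_on[OF g]] bij_betw_apply[OF g] by auto
    then show ?thesis
      using True B(3) unfolding e_def orthonormal_frame_def by simp
  qed (auto simp: e_def)
  moreover have "norm (e i) \<in> {0, 1}" for i
    using B(3) bij_betw_apply[OF g] unfolding e_def orthonormal_frame_def by auto
  ultimately have frame: "orthonormal_frame {..<DIM('g)} e"
    unfolding orthonormal_frame_def by blast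
  have span: "span (e ` {..<DIM('g)}) = S"
    using span_mono[OF img(1)] span_mono[OF img(2)] unfolding B(2)[symmetric] span_insert_0
    by (rule subset_antisym)
  show ?thesis
    by (rule that[OF frame img(1) span])
qed

lemma compact_lie_algebra_bilinear: "compact_lie_algebra br \<Longrightarrow> bilinear br"
  unfolding compact_lie_algebra_def bilinear_def by blast

text \<open>Ad-invariance of the inner product turns the q-component of [u, u] into the u-component of
  [u, q]; this identifies the bracket with the size of the q-components of brackets inside u.\<close>

lemma triple_self_eq:
  fixes br :: "'g::euclidean_space \<Rightarrow> 'g \<Rightarrow> 'g"
  assumes "compact_lie_algebra br" "subspace u" "subspace q"
  defines "B \<equiv> SOME B. orthonormal_basis B u"
  shows "triple br u u q = (\<Sum>a\<in>B. \<Sum>b\<in>B. (norm (proj q (br a b)))\<^sup>2)"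
proof -
  define C where "C = (SOME C. orthonormal_basis C q)"
  have B: "orthonormal_basis B u" and C: "orthonormal_basis C q"
    unfolding B_def C_def using orthonormal_basis_exists assms(2,3) by (metis someI_ex)+
  have swap: "(inner (br a c) b)\<^sup>2 = (inner (br a b) c)\<^sup>2" for a b c
    using assms(1) unfolding compact_lie_algebra_def by (metis inner_commute power2_minus)
  have "triple br u u q = (\<Sum>a\<in>B. \<Sum>c\<in>C. (norm (proj u (br a c)))\<^sup>2)"
    unfolding triple_def B_def C_def by (simp add: power2_norm_eq_inner)
  also have "\<dots> = (\<Sum>a\<in>B. \<Sum>c\<in>C. \<Sum>b\<in>B. (inner (br a b) c)\<^sup>2)"
    by (simp add: norm_proj_orthonormal_basis[OF B] swap)
  also have "\<dots> = (\<Sum>a\<in>B. \<Sum>b\<in>B. \<Sum>c\<in>C. (inner (br a b) c)\<^sup>2)"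
    by (simp add: sum.swap[where A = C])
  also have "\<dots> = (\<Sum>a\<in>B. \<Sum>b\<in>B. (norm (proj q (br a b)))\<^sup>2)"
    by (simp add: norm_proj_orthonormal_basis[OF C])
  finally show ?thesis .
qed

lemma subspace_linear_preimage:
  fixes f :: "'a::real_vector \<Rightarrow> 'b::real_vector"
  assumes "linear f" "subspace S"
  shows "subspace (f -` S)"
  using assms unfolding subspace_def by (simp add: linear_0 linear_add linear_scale)

lemma bilinear_span_into_subspace:
  fixes br :: "'a::real_vector \<Rightarrow> 'a \<Rightarrow> 'b::real_vector"
  assumes "bilinear br" "subspace S" "\<And>a b. a \<in> A \<Longrightarrow> b \<in> A \<Longrightarrow> br a b \<in> S"
    and "x \<in> span A" "y \<in> span A"
  shows "br x y \<in> S"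
proof -
  have lin: "linear (br a)" "linear (\<lambda>a. br a b)" for a b
    using assms(1) unfolding bilinear_def by auto
  have "span A \<subseteq> br a -` S" if "a \<in> A" for a
    using assms(3) that by (intro span_minimal subspace_linear_preimage[OF lin(1) assms(2)]) auto
  then have "span A \<subseteq> (\<lambda>a. br a y) -` S"
    using assms(5) by (intro span_minimal subspace_linear_preimage[OF lin(2) assms(2)]) auto
  then show ?thesis
    using assms(4) by auto
qed

lemma lie_subalgebra_osum:
  fixes br :: "'g::euclidean_space \<Rightarrow> 'g \<Rightarrow> 'g"
  assumes cl: "compact_lie_algebra br" and h: "lie_subalgebra br h" and U: "subspace U"
    and hU: "\<And>a x. a \<in> h \<Longrightarrow> x \<in> U \<Longrightarrow> br a x \<in> U"
    and UU: "\<And>x y. x \<in> U \<Longrightarrow> y \<in> U \<Longrightarrow> br x y \<in> osum U h"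
  shows "lie_subalgebra br (osum U h)"
  unfolding lie_subalgebra_def
proof (intro conjI ballI)
  have hs: "subspace h" using h by (simp add: lie_subalgebra_def)
  then show s: "subspace (osum U h)" by (rule subspace_osum[OF U])
  have Us: "U \<subseteq> osum U h" and hs': "h \<subseteq> osum U h"
    unfolding osum_def using subspace_0[OF hs] subspace_0[OF U] by force+
  interpret bilinear: bounded_bilinear br
    using compact_lie_algebra_bilinear[OF cl] bilinear_conv_bounded_bilinear by blast
  fix x y assume "x \<in> osum U h" "y \<in> osum U h"
  then obtain x1 x2 y1 y2 where xy: "x = x1 + x2" "y = y1 + y2" "x1 \<in> U" "x2 \<in> h" "y1 \<in> U" "y2 \<in> h"
    unfolding osum_def by blast
  have anti: "br x1 y2 = - br y2 x1"
    using cl unfolding compact_lie_algebra_def by blast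
  have "br x1 y1 \<in> osum U h" "br x1 y2 \<in> osum U h" "br x2 y1 \<in> osum U h" "br x2 y2 \<in> osum U h"
    using UU[OF xy(3,5)] hU[OF xy(6,3)] hU[OF xy(4,5)] h xy(4,6) Us hs' s anti
    by (auto simp: lie_subalgebra_def subspace_neg)
  then show "br x y \<in> osum U h"
    unfolding xy using s by (simp add: bilinear.add_left bilinear.add_right subspace_add)
qed

lemma max_subalgebra_above:
  fixes br :: "'g::euclidean_space \<Rightarrow> 'g \<Rightarrow> 'g"
  assumes "lie_subalgebra br s" "h \<subset> s" "s \<subset> k"
  obtains t where "t \<in> max_subalgebras br h k" "s \<subseteq> t"
proof -
  let ?P = "\<lambda>t. lie_subalgebra br t \<and> s \<subseteq> t \<and> t \<subset> k"
  have "\<forall>t. ?P t \<longrightarrow> dim t < DIM('g) + 1"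
    using dim_subset_UNIV by (metis le_imp_less_Suc Suc_eq_plus1)
  then obtain t where t: "?P t" and tmax: "\<And>t'. ?P t' \<Longrightarrow> dim t' \<le> dim t"
    using ex_has_greatest_nat[of ?P s dim "DIM('g) + 1"] assms by blast
  have "t \<in> max_subalgebras br h k"
    unfolding max_subalgebras_def
  proof (intro CollectI conjI allI impI)
    fix t' assume t': "lie_subalgebra br t' \<and> t \<subseteq> t' \<and> t' \<subset> k"
    then have "dim t' \<le> dim t" using t by (intro tmax) auto
    then show "t' = t"
      using t t' subspace_dim_equal[of t t'] by (auto simp: lie_subalgebra_def)
  qed (use t assms in auto)
  then show ?thesis using t that by blast
qed

lemma norm_proj_bracket_le_triple:
  fixes br :: "'g::euclidean_space \<Rightarrow> 'g \<Rightarrow> 'g"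
  assumes cl: "compact_lie_algebra br" and "subspace u" "subspace q"
    and "a \<in> insert 0 (SOME B. orthonormal_basis B u)" "b \<in> insert 0 (SOME B. orthonormal_basis B u)"
  shows "(norm (proj q (br a b)))\<^sup>2 \<le> triple br u u q"
proof -
  define B where "B = (SOME B. orthonormal_basis B u)"
  have "finite B"
    unfolding B_def using orthonormal_basis_exists[OF assms(2)]
    by (metis orthonormal_basis_def someI_ex)
  interpret bilinear: bounded_bilinear br
    using compact_lie_algebra_bilinear[OF cl] bilinear_conv_bounded_bilinear by blast
  show ?thesis
  proof (cases "a = 0 \<or> b = 0")
    case True
    then have "proj q (br a b) = 0"
      using linear_0[OF linear_proj[OF assms(3)]] by (auto simp: bilinear.zero_left bilinear.zero_right)
    then show ?thesis
      using triple_self_eq[OF assms(1-3)] by (simp add: sum_nonneg)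
  next
    case False
    then have "a \<in> B" "b \<in> B" using assms(4,5) unfolding B_def by auto
    have "(norm (proj q (br a b)))\<^sup>2 \<le> (\<Sum>b'\<in>B. (norm (proj q (br a b')))\<^sup>2)"
      using \<open>finite B\<close> \<open>b \<in> B\<close> by (intro member_le_sum) auto
    also have "\<dots> \<le> (\<Sum>a'\<in>B. \<Sum>b'\<in>B. (norm (proj q (br a' b')))\<^sup>2)"
      using \<open>finite B\<close> \<open>a \<in> B\<close>
      by (intro member_le_sum[where f = "\<lambda>a'. \<Sum>b'\<in>B. (norm (proj q (br a' b')))\<^sup>2"] sum_nonneg) auto
    finally show ?thesis
      using triple_self_eq[OF assms(1-3)] unfolding B_def by simp
  qed
qed

lemma unit_vector_exists:
  fixes S :: "'a::real_normed_vector set"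
  assumes "subspace S" "S \<noteq> {0}"
  obtains x where "x \<in> S" "norm x = 1"
proof -
  obtain y where "y \<in> S" "y \<noteq> 0"
    using assms subspace_0 by blast
  then show ?thesis
    using that[of "y /\<^sub>R norm y"] subspace_scale[OF assms(1)] by simp
qed

lemma unit_vector_orthogonal_exists:
  fixes V u :: "'g::euclidean_space set"
  assumes "subspace V" "subspace u" "u \<subset> V"
  obtains w where "w \<in> V" "norm w = 1" "\<And>y. y \<in> u \<Longrightarrow> inner w y = 0"
proof -
  obtain x where x: "x \<in> V" "x \<notin> u"
    using assms(3) by blast
  have "proj u x \<in> V"
    using proj_in[OF assms(2)] assms(3) by blast
  then have "x - proj u x \<in> ominus V u"
    using x proj_orthogonal[OF assms(2)] by (auto simp: ominus_def subspace_diff[OF assms(1)])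
  moreover have "x - proj u x \<noteq> 0"
    using x proj_in[OF assms(2), of x] by auto
  ultimately obtain w where "w \<in> ominus V u" "norm w = 1"
    using unit_vector_exists[OF subspace_ominus[OF assms(1)], of u] by blast
  then show ?thesis
    using that unfolding ominus_def by blast
qed

text \<open>Closed conditions on finitely many bounded vectors encoding some u \<in> Theta with
  \<open>\<langle>u u q\<rangle> \<le> \<epsilon>\<close>: the frame e spans u, v t witnesses u \<inter> (k \<ominus> t) \<noteq> {0}, and w witnesses
  u \<noteq> k \<ominus> h.\<close>

definition theta_witness :: "('g::euclidean_space \<Rightarrow> 'g \<Rightarrow> 'g) \<Rightarrow> 'g set \<Rightarrow> 'g set \<Rightarrow> real \<Rightarrow>
    (nat \<Rightarrow> 'g) \<Rightarrow> ('g set \<Rightarrow> 'g) \<Rightarrow> 'g \<Rightarrow> bool" where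
  "theta_witness br h k \<epsilon> e v w \<longleftrightarrow>
     orthonormal_frame {..<DIM('g)} e \<and>
     (\<forall>i<DIM('g). e i \<in> ominus k h \<and>
        (\<forall>a\<in>h. frame_proj {..<DIM('g)} e (br a (e i)) = br a (e i))) \<and>
     (\<forall>i<DIM('g). \<forall>j<DIM('g). (norm (br (e i) (e j) - frame_proj {..<DIM('g)} e (br (e i) (e j))
        - proj h (br (e i) (e j))))\<^sup>2 \<le> \<epsilon>) \<and>
     (\<forall>t\<in>max_subalgebras br h k. v t \<in> ominus k t \<and> norm (v t) = 1 \<and>
        frame_proj {..<DIM('g)} e (v t) = v t) \<and>
     w \<in> ominus k h \<and> norm w = 1 \<and> (\<forall>i<DIM('g). inner w (e i) = 0)"

lemma theta_witnessD:
  fixes br :: "'g::euclidean_space \<Rightarrow> 'g \<Rightarrow> 'g"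
  assumes "theta_witness br h k \<epsilon> e v w"
  shows "orthonormal_frame {..<DIM('g)} e"
    and "i < DIM('g) \<Longrightarrow> e i \<in> ominus k h"
    and "i < DIM('g) \<Longrightarrow> a \<in> h \<Longrightarrow> frame_proj {..<DIM('g)} e (br a (e i)) = br a (e i)"
    and "i < DIM('g) \<Longrightarrow> j < DIM('g) \<Longrightarrow> (norm (br (e i) (e j)
      - frame_proj {..<DIM('g)} e (br (e i) (e j)) - proj h (br (e i) (e j))))\<^sup>2 \<le> \<epsilon>"
    and "t \<in> max_subalgebras br h k \<Longrightarrow> v t \<in> ominus k t"
    and "t \<in> max_subalgebras br h k \<Longrightarrow> norm (v t) = 1"
    and "t \<in> max_subalgebras br h k \<Longrightarrow> frame_proj {..<DIM('g)} e (v t) = v t"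
    and "w \<in> ominus k h" "norm w = 1" "i < DIM('g) \<Longrightarrow> inner w (e i) = 0"
  using assms unfolding theta_witness_def by auto

lemma theta_witness_mono:
  "theta_witness br h k \<epsilon> e v w \<Longrightarrow> \<epsilon> \<le> \<epsilon>' \<Longrightarrow> theta_witness br h k \<epsilon>' e v w"
  unfolding theta_witness_def by (meson order_trans)

lemma Theta_imp_theta_witness:
  fixes br :: "'g::euclidean_space \<Rightarrow> 'g \<Rightarrow> 'g"
  assumes cl: "compact_lie_algebra br" and hs: "subspace h" and ks: "lie_subalgebra br k"
    and hk: "h \<subseteq> k" and uT: "u \<in> Theta br h k"
  shows "\<exists>e v w. theta_witness br h k (triple br u u (ominus k (osum u h))) e v w"
proof -
  define q where "q = ominus k (osum u h)"
  have k: "subspace k" "\<And>a b. a \<in> k \<Longrightarrow> b \<in> k \<Longrightarrow> br a b \<in> k"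
    using ks by (auto simp: lie_subalgebra_def)
  have u: "subspace u" "\<And>a y. a \<in> h \<Longrightarrow> y \<in> u \<Longrightarrow> br a y \<in> u" "u \<subset> ominus k h"
    "\<And>t. t \<in> max_subalgebras br h k \<Longrightarrow> u \<inter> ominus k t \<noteq> {0}"
    using uT by (auto simp: Theta_def invariant_def)
  have uk: "u \<subseteq> k" using u(3) ominus_subset by blast
  define B where "B = (SOME B. orthonormal_basis B u)"
  obtain e where e: "orthonormal_frame {..<DIM('g)} e" "e ` {..<DIM('g)} \<subseteq> insert 0 B"
    "span (e ` {..<DIM('g)}) = u"
    using orthonormal_basis_padded_frame orthonormal_basis_exists[OF u(1)] someI_ex
    unfolding B_def by metis
  have proj_u: "frame_proj {..<DIM('g)} e y = proj u y" for y
    using proj_span_frame[OF _ e(1)] e(3) by simp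
  have eu: "e i \<in> u" if "i < DIM('g)" for i
    using that e(3) span_base[of "e i" "e ` {..<DIM('g)}"] by simp
  obtain w where w: "w \<in> ominus k h" "norm w = 1" "\<And>y. y \<in> u \<Longrightarrow> inner w y = 0"
    using unit_vector_orthogonal_exists[OF subspace_ominus[OF k(1)] u(1,3)] by blast
  have "\<exists>x. x \<in> u \<inter> ominus k t \<and> norm x = 1" if "t \<in> max_subalgebras br h k" for t
    using unit_vector_exists[OF subspace_inter[OF u(1) subspace_ominus[OF k(1)]] u(4)[OF that]]
    by blast
  then obtain v where v: "\<And>t. t \<in> max_subalgebras br h k \<Longrightarrow> v t \<in> u \<inter> ominus k t \<and> norm (v t) = 1"
    by metis
  have defect: "(norm (br (e i) (e j) - proj u (br (e i) (e j)) - proj h (br (e i) (e j))))\<^sup>2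
      \<le> triple br u u q" if "i < DIM('g)" "j < DIM('g)" for i j
  proof -
    have "br (e i) (e j) \<in> k" using eu that uk k(2) by blast
    then have "proj q (br (e i) (e j)) = br (e i) (e j) - proj u (br (e i) (e j)) - proj h (br (e i) (e j))"
      unfolding q_def using proj_ominus_osum[OF k(1) hs u(1) hk] u(3) by blast
    then show ?thesis
      using norm_proj_bracket_le_triple[OF cl u(1) subspace_ominus[OF k(1)]] e(2) that
      unfolding q_def B_def by (metis image_subset_iff lessThan_iff)
  qed
  have "theta_witness br h k (triple br u u q) e v w"
    unfolding theta_witness_def proj_u
    using e(1) eu u(2,3) defect v w proj_id[OF u(1)] by auto
  then show ?thesis unfolding q_def by blast
qed

lemma bounded_family_convergent_subseq:
  fixes X :: "nat \<Rightarrow> 'i \<Rightarrow> 'a::heine_borel"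
  assumes "finite I" "\<And>i. i \<in> I \<Longrightarrow> bounded (range (\<lambda>n. X n i))"
  obtains r l where "strict_mono r" "\<And>i. i \<in> I \<Longrightarrow> (\<lambda>n. X (r n) i) \<longlonglongrightarrow> l i"
proof -
  have "\<forall>J\<subseteq>I. \<exists>l r. strict_mono r \<and>
      (\<forall>\<epsilon>>0. eventually (\<lambda>n. \<forall>i\<in>J. dist (X (r n) i) (l i) < \<epsilon>) sequentially)"
    using assms by (intro compact_lemma_general[where unproj = "\<lambda>x. x"]) (auto simp: image_image)
  then obtain l r where "strict_mono r"
    and ev: "\<And>\<epsilon>. \<epsilon> > 0 \<Longrightarrow> eventually (\<lambda>n. \<forall>i\<in>I. dist (X (r n) i) (l i) < \<epsilon>) sequentially"
    by blast
  have "(\<lambda>n. X (r n) i) \<longlonglongrightarrow> l i" if "i \<in> I" for i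
    unfolding tendsto_iff
  proof (intro allI impI)
    fix \<epsilon> :: real assume "\<epsilon> > 0"
    show "eventually (\<lambda>n. dist (X (r n) i) (l i) < \<epsilon>) sequentially"
      using ev[OF \<open>\<epsilon> > 0\<close>] by (rule eventually_mono) (use that in blast)
  qed
  then show ?thesis
    using that \<open>strict_mono r\<close> by blast
qed

lemma frame_proj_tendsto:
  assumes "\<And>i. i \<in> I \<Longrightarrow> (\<lambda>n. E n i) \<longlonglongrightarrow> e i" "Y \<longlonglongrightarrow> y"
  shows "(\<lambda>n. frame_proj I (E n) (Y n)) \<longlonglongrightarrow> frame_proj I e y"
  unfolding frame_proj_def by (intro tendsto_intros assms)

lemma orthonormal_frame_limit:
  assumes "\<And>n. orthonormal_frame I (E n)" "\<And>i. i \<in> I \<Longrightarrow> (\<lambda>n. E n i) \<longlonglongrightarrow> e i"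
  shows "orthonormal_frame I e"
  unfolding orthonormal_frame_def
proof (intro conjI ballI impI)
  fix i j assume "i \<in> I" "j \<in> I" "i \<noteq> j"
  then have "(\<lambda>n. inner (E n i) (E n j)) = (\<lambda>n. 0)"
    using assms(1) by (auto simp: orthonormal_frame_def)
  then show "inner (e i) (e j) = 0"
    using tendsto_inner[OF assms(2)[OF \<open>i \<in> I\<close>] assms(2)[OF \<open>j \<in> I\<close>]]
    by (metis LIMSEQ_const_iff)
next
  fix i assume "i \<in> I"
  then have "norm (E n i) \<in> {0, 1}" for n
    using assms(1) by (auto simp: orthonormal_frame_def)
  then show "norm (e i) \<in> {0, 1}"
    using closed_sequentially[OF finite_imp_closed[of "{0::real, 1}"] _ tendsto_norm[OF assms(2)]]
      \<open>i \<in> I\<close> by blast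
qed

lemma norm_le_one_if_orthonormal_frame:
  "orthonormal_frame I e \<Longrightarrow> i \<in> I \<Longrightarrow> norm (e i) \<le> 1"
  unfolding orthonormal_frame_def by auto

lemma theta_witness_convergent_subseq:
  fixes br :: "'g::euclidean_space \<Rightarrow> 'g \<Rightarrow> 'g"
    and E :: "nat \<Rightarrow> nat \<Rightarrow> 'g" and V :: "nat \<Rightarrow> 'g set \<Rightarrow> 'g" and W :: "nat \<Rightarrow> 'g"
  assumes "finite (max_subalgebras br h k)"
    and "\<And>n. theta_witness br h k (\<epsilon> n) (E n) (V n) (W n)"
  obtains r e v w where "strict_mono r"
    "\<And>i. i < DIM('g) \<Longrightarrow> (\<lambda>n. E (r n) i) \<longlonglongrightarrow> e i"
    "\<And>t. t \<in> max_subalgebras br h k \<Longrightarrow> (\<lambda>n. V (r n) t) \<longlonglongrightarrow> v t"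
    "(\<lambda>n. W (r n)) \<longlonglongrightarrow> w"
proof -
  define X where "X n = case_sum (V n) (\<lambda>i. if i < DIM('g) then E n i else W n)" for n
  define I where "I = Inl ` max_subalgebras br h k \<union> Inr ` {..DIM('g)}"
  have "norm (X n i) \<le> 1" if "i \<in> I" for n i
    using that assms(2)[of n] norm_le_one_if_orthonormal_frame[of "{..<DIM('g)}" "E n"]
    unfolding X_def I_def theta_witness_def by (auto simp: less_Suc_eq_le[symmetric])
  then have bnd: "bounded (range (\<lambda>n. X n i))" if "i \<in> I" for i
    using that by (auto simp: bounded_iff)
  have fin: "finite I"
    unfolding I_def using assms(1) by (intro finite_UnI finite_imageI) simp_all
  obtain r l where r: "strict_mono r" and conv: "\<And>i. i \<in> I \<Longrightarrow> (\<lambda>n. X (r n) i) \<longlonglongrightarrow> l i"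
    using bounded_family_convergent_subseq[of I X] fin bnd by metis
  have "(\<lambda>n. E (r n) i) \<longlonglongrightarrow> l (Inr i)" if "i < DIM('g)" for i
    using conv[of "Inr i"] that by (simp add: X_def I_def)
  moreover have "(\<lambda>n. V (r n) t) \<longlonglongrightarrow> l (Inl t)" if "t \<in> max_subalgebras br h k" for t
    using conv[of "Inl t"] that by (simp add: X_def I_def)
  moreover have "(\<lambda>n. W (r n)) \<longlonglongrightarrow> l (Inr DIM('g))"
    using conv[of "Inr DIM('g)"] by (simp add: X_def I_def)
  ultimately show ?thesis
    by (rule that[OF r, of "\<lambda>i. l (Inr i)" "\<lambda>t. l (Inl t)"])
qed

lemma theta_witness_limit:
  fixes br :: "'g::euclidean_space \<Rightarrow> 'g \<Rightarrow> 'g"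
  assumes cl: "compact_lie_algebra br" and hs: "subspace h" and ks: "subspace k"
    and fin: "finite (max_subalgebras br h k)"
    and approx: "\<And>\<epsilon>. \<epsilon> > 0 \<Longrightarrow> \<exists>e v w. theta_witness br h k \<epsilon> e v w"
  shows "\<exists>e v w. theta_witness br h k 0 e v w"
proof -
  let ?N = "DIM('g)" and ?P = "frame_proj {..<DIM('g)}"
  have "\<forall>n. \<exists>x. theta_witness br h k (inverse (Suc n)) (fst x) (fst (snd x)) (snd (snd x))"
    using approx by simp
  then obtain X where X: "\<forall>n. theta_witness br h k (inverse (Suc n)) (fst (X n)) (fst (snd (X n))) (snd (snd (X n)))"
    by (rule choice[THEN exE])
  define E V W where "E = fst \<circ> X" and "V = fst \<circ> snd \<circ> X" and "W = snd \<circ> snd \<circ> X"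
  have W: "theta_witness br h k (inverse (Suc n)) (E n) (V n) (W n)" for n
    using X by (simp add: E_def V_def W_def)
  obtain r e v w where r: "strict_mono r"
    and cE: "\<And>i. i < ?N \<Longrightarrow> (\<lambda>n. E (r n) i) \<longlonglongrightarrow> e i"
    and cV: "\<And>t. t \<in> max_subalgebras br h k \<Longrightarrow> (\<lambda>n. V (r n) t) \<longlonglongrightarrow> v t"
    and cW: "(\<lambda>n. W (r n)) \<longlonglongrightarrow> w"
    by (rule theta_witness_convergent_subseq[OF fin W]) (rule that)
  have "theta_witness br h k (inverse (Suc (r n))) (E (r n)) (V (r n)) (W (r n))" for n
    by (rule W)
  note W' = theta_witnessD[OF this]
  interpret bilinear: bounded_bilinear br
    using compact_lie_algebra_bilinear[OF cl] bilinear_conv_bounded_bilinear by blast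
  have cP: "(\<lambda>n. ?P (E (r n)) (Y n)) \<longlonglongrightarrow> ?P e y" if "Y \<longlonglongrightarrow> y" for Y y
    by (rule frame_proj_tendsto) (use cE that in auto)
  have cproj_h: "(\<lambda>n. proj h (Y n)) \<longlonglongrightarrow> proj h y" if "Y \<longlonglongrightarrow> y" for Y y
    using linear_proj[OF hs] that by (simp add: linear_conv_bounded_linear bounded_linear.tendsto)
  have closed_ominus: "closed (ominus k t)" for t
    by (rule closed_subspace[OF subspace_ominus[OF ks]])
  have fixed_limit: "?P e y = y" if "Y \<longlonglongrightarrow> y" "\<And>n. ?P (E (r n)) (Y n) = Y n" for Y y
    using LIMSEQ_unique[OF cP[OF that(1)]] that by simp
  have defect: "(norm (br (e i) (e j) - ?P e (br (e i) (e j)) - proj h (br (e i) (e j))))\<^sup>2 \<le> 0"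
    if "i < ?N" "j < ?N" for i j
  proof (rule LIMSEQ_le)
    have "(\<lambda>n. br (E (r n) i) (E (r n) j)) \<longlonglongrightarrow> br (e i) (e j)"
      using cE that by (intro bilinear.tendsto)
    then show "(\<lambda>n. (norm (br (E (r n) i) (E (r n) j) - ?P (E (r n)) (br (E (r n) i) (E (r n) j))
        - proj h (br (E (r n) i) (E (r n) j))))\<^sup>2)
      \<longlonglongrightarrow> (norm (br (e i) (e j) - ?P e (br (e i) (e j)) - proj h (br (e i) (e j))))\<^sup>2"
      by (intro tendsto_intros cP cproj_h)
    show "(\<lambda>n. inverse (real (Suc (r n)))) \<longlonglongrightarrow> 0"
      using LIMSEQ_subseq_LIMSEQ[OF LIMSEQ_inverse_real_of_nat r] by (simp add: o_def)
  qed (use W'(4) that in auto)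
  have "theta_witness br h k 0 e v w"
    unfolding theta_witness_def
  proof (intro conjI allI impI ballI)
    show "orthonormal_frame {..<?N} e"
      using W'(1) cE by (rule orthonormal_frame_limit) simp
    fix i assume i: "i < ?N"
    show "e i \<in> ominus k h"
      using closed_sequentially[OF closed_ominus _ cE[OF i]] W'(2)[OF i] by blast
    show "?P e (br a (e i)) = br a (e i)" if "a \<in> h" for a
      using W'(3)[OF i that] by (intro fixed_limit[OF bilinear.tendsto[OF tendsto_const cE[OF i]]])
    show "inner w (e i) = 0"
      using LIMSEQ_unique[OF tendsto_inner[OF cW cE[OF i]]] W'(10)[OF i] by simp
  next
    fix t assume t: "t \<in> max_subalgebras br h k"
    show "v t \<in> ominus k t"
      using closed_sequentially[OF closed_ominus _ cV[OF t]] W'(5)[OF t] by blast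
    show "norm (v t) = 1"
      using LIMSEQ_unique[OF tendsto_norm[OF cV[OF t]]] W'(6)[OF t] by simp
    show "?P e (v t) = v t"
      using W'(7)[OF t] by (intro fixed_limit[OF cV[OF t]])
  next
    show "w \<in> ominus k h"
      using closed_sequentially[OF closed_ominus _ cW] W'(8) by blast
    show "norm w = 1"
      using LIMSEQ_unique[OF tendsto_norm[OF cW]] W'(9) by simp
  qed (use defect in auto)
  then show ?thesis by blast
qed

lemma orthogonal_osum_eq_0:
  assumes "x \<in> osum U h" "\<And>y. y \<in> U \<Longrightarrow> inner x y = 0" "\<And>y. y \<in> h \<Longrightarrow> inner x y = 0"
  shows "x = 0"
proof -
  obtain a b where "x = a + b" "a \<in> U" "b \<in> h"
    using assms(1) unfolding osum_def by blast
  then have "inner x x = 0"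
    using assms(2,3) by (simp add: inner_add_right)
  then show ?thesis by simp
qed

lemma no_exact_theta_witness:
  fixes br :: "'g::euclidean_space \<Rightarrow> 'g \<Rightarrow> 'g"
  assumes cl: "compact_lie_algebra br" and hl: "lie_subalgebra br h" and kl: "lie_subalgebra br k"
    and hk: "h \<subseteq> k" and M: "max_subalgebras br h k \<noteq> {}"
    and W: "theta_witness br h k 0 e v w"
  shows False
proof -
  let ?N = "DIM('g)"
  define U where "U = span (e ` {..<?N})"
  note W = theta_witnessD[OF W]
  have hs: "subspace h" and ks: "subspace k"
    using hl kl by (auto simp: lie_subalgebra_def)
  have U: "subspace U" unfolding U_def by simp
  have proj_U: "frame_proj {..<?N} e y = proj U y" for y
    unfolding U_def using proj_span_frame[OF _ W(1)] by simp
  have in_U: "frame_proj {..<?N} e y \<in> U" for y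
    unfolding U_def by (rule frame_proj_in_span)
  have Ukh: "U \<subseteq> ominus k h"
    unfolding U_def using W(2) by (intro span_minimal subspace_ominus[OF ks]) auto
  have hU: "br a x \<in> U" if "a \<in> h" "x \<in> U" for a x
  proof -
    have "linear (br a)"
      using cl by (simp add: compact_lie_algebra_def)
    then have "U \<subseteq> br a -` U"
      unfolding U_def using W(3)[OF _ that(1)] in_U[unfolded U_def]
      by (intro span_minimal subspace_linear_preimage) (auto, metis)
    then show ?thesis using that(2) by blast
  qed
  have UU: "br x y \<in> osum U h" if "x \<in> U" "y \<in> U" for x y
  proof (rule bilinear_span_into_subspace[OF compact_lie_algebra_bilinear[OF cl] subspace_osum[OF U hs]])
    fix a b assume "a \<in> e ` {..<?N}" "b \<in> e ` {..<?N}"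
    then obtain i j where ij: "i < ?N" "j < ?N" "a = e i" "b = e j" by blast
    then have "br a b = frame_proj {..<?N} e (br a b) + proj h (br a b)"
      using W(4)[OF ij(1,2)] by (simp add: algebra_simps)
    then show "br a b \<in> osum U h"
      unfolding osum_def using in_U proj_in[OF hs] by blast
  qed (use that in \<open>simp_all add: U_def\<close>)
  define s where "s = osum U h"
  have s: "lie_subalgebra br s"
    unfolding s_def using lie_subalgebra_osum[OF cl hl U hU UU] .
  have Us: "U \<subseteq> s" and hs': "h \<subseteq> s"
    unfolding s_def osum_def using subspace_0[OF hs] subspace_0[OF U] by force+
  have vU: "v t \<in> U" if "t \<in> max_subalgebras br h k" for t
    using W(7)[OF that] in_U by metis
  have "h \<subset> s"
  proof -
    obtain t where t: "t \<in> max_subalgebras br h k" using M by blast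
    have "v t \<notin> h"
    proof
      assume "v t \<in> h"
      then have "inner (v t) (v t) = 0" using vU[OF t] Ukh unfolding ominus_def by blast
      then show False using W(6)[OF t] by simp
    qed
    then show ?thesis using hs' vU[OF t] Us by blast
  qed
  moreover have "s \<subset> k"
  proof -
    have "s \<subseteq> k"
      unfolding s_def osum_def using Ukh hk ks ominus_subset by (fastforce intro: subspace_add)
    moreover have "w \<notin> s"
    proof
      assume "w \<in> s"
      have "inner w y = 0" if "y \<in> U" for y
        using orthogonal_to_span[OF that[unfolded U_def]] W(10) by (auto simp: orthogonal_def)
      then have "w = 0"
        using orthogonal_osum_eq_0[of w U h] \<open>w \<in> s\<close> W(8) unfolding s_def ominus_def by blast
      then show False using W(9) by simp
    qed
    ultimately show ?thesis using W(8) ominus_subset by blast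
  qed
  ultimately obtain t where t: "t \<in> max_subalgebras br h k" "s \<subseteq> t"
    using max_subalgebra_above[OF s] by blast
  then have "inner (v t) (v t) = 0"
    using W(5)[OF t(1)] vU[OF t(1)] Us t(2) unfolding ominus_def by blast
  then show False using W(6)[OF t(1)] by simp
qed

theorem mainTheorem15:
  fixes br :: "'g::euclidean_space \<Rightarrow> 'g \<Rightarrow> 'g" and h k :: "'g set"
  assumes "compact_lie_algebra br"
    and "lie_subalgebra br h"
    and "dim h + 3 \<le> DIM('g)"
    and "hypothesis_H br h"
    and "lie_subalgebra br k" and "h \<subset> k"
    and "finite (max_subalgebras br h k)" and "max_subalgebras br h k \<noteq> {}"
  shows "theta br h k > 0"
proof (cases "Theta br h k = {}")
  case False
  define S where "S = {triple br u u (ominus k (osum u h)) | u. u \<in> Theta br h k}"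
  have "\<not> Inf S \<le> 0"
  proof
    assume "Inf S \<le> 0"
    have "\<exists>e v w. theta_witness br h k \<epsilon> e v w" if "\<epsilon> > 0" for \<epsilon>
    proof -
      have "S \<noteq> {}" "Inf S < \<epsilon>"
        using False \<open>Inf S \<le> 0\<close> \<open>\<epsilon> > 0\<close> unfolding S_def by auto
      then obtain u where "u \<in> Theta br h k" "triple br u u (ominus k (osum u h)) < \<epsilon>"
        using cInf_lessD[of S \<epsilon>] unfolding S_def by blast
      then show ?thesis
        using Theta_imp_theta_witness[OF assms(1) _ assms(5)] assms(2,6)
        by (meson lie_subalgebra_def less_imp_le psubset_imp_subset theta_witness_mono)
    qed
    then obtain e v w where "theta_witness br h k 0 e v w"
      using theta_witness_limit[OF assms(1) _ _ assms(7)] assms(2,5) by (meson lie_subalgebra_def)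
    then show False
      using no_exact_theta_witness[OF assms(1,2,5) _ assms(8)] assms(6) by blast
  qed
  then show ?thesis using False by (simp add: theta_def S_def)
qed (simp add: theta_def)

end
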